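(* Let $\mathcal R_1,\mathcal R_2\subseteq\mathbb{N}_0^n\times\mathbb{N}_0^n$ be reaction networks on the same set of $n$ species. If $\mathrm{cl}(\mathcal R_1)=\mathrm{cl}(\mathcal R_2)$, then $\mathcal R_1(x)=\mathcal R_2(x)$ for all $x\in\mathbb{N}_0^n$.
   Context: A reaction network (RN) is a (possibly infinite) subset $\mathcal R\subseteq\mathbb{N}_0^n\times\mathbb{N}_0^n$ containing no element $(y,y')$ with $y=y'$; elements $(y,y')$ are reactions $y\to y'$. For $r_1=(y_1,y_1'),\ r_2=(y_2,y_2')$ define $r_1\oplus r_2=(y_1+0\vee(y_2-y_1'),\ y_2'+0\vee(y_1'-y_2))$ ($\vee$ componentwise maximum); it is associative. For $A\subseteq\mathbb{N}_0^n\times\mathbb{N}_0^n$, $\mathrm{cl}(A)$ is the set of all finite $\oplus$-sums of elements of $A$, including the empty sum $(0,0)$. An ordered sequence of reactions $y_1\to y_1',\dots,y_m\to y_m'$ is active on $x\in\mathbb{N}_0^n$ if $x+\sum_{i=1}^{k-1}(y_i'-y_i)\ge y_k$ (componentwise) for all $k$. A state $x$ leads to $x'$ via $\mathcal R$ if there is an ordered sequence of $m\ge0$ reactions of $\mathcal R$ (repetitions allowed) active on $x$ with $x'=x+\sum_{i=1}^m(y_i'-y_i)$. $\mathcal R(x)$ denotes the set of states $x'$ to which $x$ leads via $\mathcal R$. *)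

theory Defs
  imports "HOL-Analysis.Analysis"
begin

text \<open>Complexes/states are vectors in N_0^n, modelled as nat ^ 'n (n = CARD('n)).
  A reaction is a pair (y, y'). Reaction networks exclude y = y'.\<close>

type_synonym 'n cplx = "nat ^ 'n"
type_synonym 'n reaction = "'n cplx \<times> ('n::finite) cplx"

definition reaction_network :: "('n::finite) reaction set \<Rightarrow> bool" where
  "reaction_network R \<longleftrightarrow> (\<forall>(y, y') \<in> R. y \<noteq> y')"

definition pos_diff :: "('n::finite) cplx \<Rightarrow> ('n::finite) cplx \<Rightarrow> ('n::finite) cplx" where
  "pos_diff a b = (\<chi> i. nat (max 0 (int (a $ i) - int (b $ i))))"

definition oplus :: "('n::finite) reaction \<Rightarrow> ('n::finite) reaction \<Rightarrow> ('n::finite) reaction" (infixl "\<oplus>\<^sub>r" 65) where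
  "oplus r1 r2 = (fst r1 + pos_diff (fst r2) (snd r1), snd r2 + pos_diff (snd r1) (fst r2))"

text \<open>Finite oplus-sums of a list of reactions (oplus is associative and (0,0) is a unit); the empty sum is (0,0).\<close>
fun oplus_list :: "('n::finite) reaction list \<Rightarrow> ('n::finite) reaction" where
  "oplus_list [] = (0, 0)"
| "oplus_list (r # rs) = r \<oplus>\<^sub>r oplus_list rs"

definition cl :: "('n::finite) reaction set \<Rightarrow> ('n::finite) reaction set" where
  "cl A = {oplus_list rs | rs. set rs \<subseteq> A}"

definition shift :: "('n::finite) cplx \<Rightarrow> ('n::finite) reaction list \<Rightarrow> int ^ 'n" where
  "shift x rs = (\<chi> i. int (x $ i) + (\<Sum>r\<leftarrow>rs. int (snd r $ i) - int (fst r $ i)))"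

definition active :: "('n::finite) reaction list \<Rightarrow> ('n::finite) cplx \<Rightarrow> bool" where
  "active rs x \<longleftrightarrow> (\<forall>k < length rs. \<forall>i. shift x (take k rs) $ i \<ge> int (fst (rs ! k) $ i))"

definition leads_to :: "('n::finite) reaction set \<Rightarrow> ('n::finite) cplx \<Rightarrow> ('n::finite) cplx \<Rightarrow> bool" where
  "leads_to R x x' \<longleftrightarrow> (\<exists>rs. set rs \<subseteq> R \<and> active rs x \<and> (\<forall>i. int (x' $ i) = shift x rs $ i))"

definition reach :: "('n::finite) reaction set \<Rightarrow> ('n::finite) cplx \<Rightarrow> ('n::finite) cplx set" where
  "reach R x = {x'. leads_to R x x'}"

end

theory Submission
  imports Defs
begin

text \<open>A state leads to another exactly when it is connected to it by single firings of reactions,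
  i.e. reachability is the reflexive transitive closure of the one-step firing relation. Firing a
  composite reaction, an \<open>\<oplus>\<close>-sum of reactions of \<open>R\<close>, can be simulated by firing its
  constituents one after another, since the source of the composite supplies everything each
  constituent needs. Hence the firing relations of \<open>R\<close> and of \<open>cl R\<close> have the same reflexive
  transitive closure, and networks with equal closures have equal reachable sets.\<close>

text \<open>Subtraction on \<open>nat ^ 'n\<close> truncates componentwise; it is exact here because \<open>fst r \<le> x\<close>.\<close>

definition fire_rel :: "('n::finite) reaction set \<Rightarrow> ('n cplx \<times> 'n cplx) set" where
  "fire_rel R = {(x, x + snd r - fst r) | x r. r \<in> R \<and> fst r \<le> x}"

lemma fire_relI: "r \<in> R \<Longrightarrow> fst r \<le> x \<Longrightarrow> (x, x + snd r - fst r) \<in> fire_rel R"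
  unfolding fire_rel_def by blast

lemma fire_rel_mono: "R \<subseteq> S \<Longrightarrow> fire_rel R \<subseteq> fire_rel S"
  unfolding fire_rel_def by blast

lemma pos_diff_eq_minus: "pos_diff a b = a - b"
  unfolding pos_diff_def vec_eq_iff by auto

lemma shift_Nil: "shift x [] $ i = int (x $ i)"
  by (simp add: shift_def)

lemma shift_Cons:
  assumes "fst r \<le> x"
  shows "shift x (r # rs) = shift (x + snd r - fst r) rs"
proof -
  have "int (x $ i + snd r $ i - fst r $ i) = int (x $ i) + (int (snd r $ i) - int (fst r $ i))" for i
  proof -
    have "fst r $ i \<le> x $ i"
      using assms by (simp add: less_eq_vec_def)
    then show ?thesis by linarith
  qed
  then show ?thesis
    by (simp add: shift_def vec_eq_iff algebra_simps)
qed

lemma active_Cons: "active (r # rs) x \<longleftrightarrow> fst r \<le> x \<and> active rs (x + snd r - fst r)"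
proof (cases "fst r \<le> x")
  case True
  have "active (r # rs) x \<longleftrightarrow>
      (\<forall>i. int (fst r $ i) \<le> int (x $ i)) \<and>
      (\<forall>k < length rs. \<forall>i. shift x (take (Suc k) (r # rs)) $ i \<ge> int (fst (rs ! k) $ i))"
    unfolding active_def by (simp add: All_less_Suc2 shift_Nil)
  with True show ?thesis
    by (simp add: active_def shift_Cons less_eq_vec_def)
next
  case False
  then show ?thesis
    unfolding active_def by (auto simp: shift_Nil less_eq_vec_def)
qed

lemma leads_to_iff_rtrancl_fire_rel: "leads_to R x x' \<longleftrightarrow> (x, x') \<in> (fire_rel R)\<^sup>*"
proof
  have "(x, x') \<in> (fire_rel R)\<^sup>*"
    if "set rs \<subseteq> R" "active rs x" "\<forall>i. int (x' $ i) = shift x rs $ i" for rs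
    using that
  proof (induction rs arbitrary: x)
    case Nil
    then have "x' = x" by (simp add: shift_Nil vec_eq_iff)
    then show ?case by simp
  next
    case (Cons r rs)
    then have "(x, x + snd r - fst r) \<in> fire_rel R"
      by (intro fire_relI) (auto simp: active_Cons)
    moreover have "(x + snd r - fst r, x') \<in> (fire_rel R)\<^sup>*"
      using Cons by (intro Cons.IH) (auto simp: active_Cons shift_Cons)
    ultimately show ?case by (rule converse_rtrancl_into_rtrancl)
  qed
  then show "(x, x') \<in> (fire_rel R)\<^sup>*" if "leads_to R x x'"
    using that by (auto simp: leads_to_def)
next
  show "leads_to R x x'" if "(x, x') \<in> (fire_rel R)\<^sup>*"
    using that
  proof (induction rule: converse_rtrancl_induct)
    case base
    show ?case
      unfolding leads_to_def by (intro exI[of _ "[]"]) (simp add: active_def shift_Nil)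
  next
    case (step x y)
    then obtain r rs where "r \<in> R" "fst r \<le> x" "y = x + snd r - fst r"
      and "set rs \<subseteq> R" "active rs y" "\<forall>i. int (x' $ i) = shift y rs $ i"
      by (auto simp: fire_rel_def leads_to_def)
    then show ?case
      unfolding leads_to_def by (intro exI[of _ "r # rs"]) (simp add: active_Cons shift_Cons)
  qed
qed

lemma reach_eq_Image_rtrancl: "reach R x = (fire_rel R)\<^sup>* `` {x}"
  by (auto simp: reach_def leads_to_iff_rtrancl_fire_rel)

lemma subset_cl: "R \<subseteq> cl R"
proof
  fix r assume "r \<in> R"
  moreover have "oplus_list [r] = r"
    by (simp add: oplus_def pos_diff_eq_minus prod_eq_iff vec_eq_iff)
  ultimately show "r \<in> cl R"
    unfolding cl_def by (metis (mono_tags) empty_subsetI insert_subset list.set mem_Collect_eq)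
qed

lemma oplus_list_in_rtrancl_fire_rel:
  assumes "set ts \<subseteq> R" "fst (oplus_list ts) \<le> x"
  shows "(x, x + snd (oplus_list ts) - fst (oplus_list ts)) \<in> (fire_rel R)\<^sup>*"
  using assms
proof (induction ts arbitrary: x)
  case Nil
  then show ?case by simp
next
  case (Cons r ts)
  obtain a b where ab: "oplus_list ts = (a, b)" by fastforce
  have src: "fst r $ i + (a $ i - snd r $ i) \<le> x $ i" for i
    using Cons.prems(2) ab by (simp add: oplus_def pos_diff_eq_minus less_eq_vec_def)
  let ?y = "x + snd r - fst r"
  have "fst r $ i \<le> x $ i" "a $ i \<le> ?y $ i" for i
    using src[of i] by auto
  then have "fst r \<le> x" "a \<le> ?y"
    by (simp_all add: less_eq_vec_def)
  with Cons.prems(1) have "(x, ?y) \<in> fire_rel R" "(?y, ?y + b - a) \<in> (fire_rel R)\<^sup>*"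
    using Cons.IH[of ?y] ab by (auto intro: fire_relI)
  moreover have "?y + b - a = x + snd (oplus_list (r # ts)) - fst (oplus_list (r # ts))"
  proof -
    have "?y $ i + b $ i - a $ i =
        x $ i + (b $ i + (snd r $ i - a $ i)) - (fst r $ i + (a $ i - snd r $ i))" for i
      using src[of i] by simp
    then show ?thesis
      using ab by (simp add: oplus_def pos_diff_eq_minus vec_eq_iff)
  qed
  ultimately show ?case
    by (metis converse_rtrancl_into_rtrancl)
qed

lemma rtrancl_fire_rel_cl: "(fire_rel (cl R))\<^sup>* = (fire_rel R)\<^sup>*"
proof (rule rtrancl_subset)
  show "fire_rel R \<subseteq> fire_rel (cl R)"
    using subset_cl by (rule fire_rel_mono)
  show "fire_rel (cl R) \<subseteq> (fire_rel R)\<^sup>*"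
  proof
    fix p assume "p \<in> fire_rel (cl R)"
    then obtain x r where "p = (x, x + snd r - fst r)" and "r \<in> cl R" "fst r \<le> x"
      unfolding fire_rel_def by blast
    moreover from \<open>r \<in> cl R\<close> obtain ts where "r = oplus_list ts" "set ts \<subseteq> R"
      by (auto simp: cl_def)
    ultimately show "p \<in> (fire_rel R)\<^sup>*"
      using oplus_list_in_rtrancl_fire_rel by blast
  qed
qed

lemma reach_cl: "reach (cl R) x = reach R x"
  by (simp add: reach_eq_Image_rtrancl rtrancl_fire_rel_cl)

theorem corollary3p4:
  fixes R1 R2 :: "'n::finite reaction set"
  assumes "reaction_network R1" and "reaction_network R2"
    and "cl R1 = cl R2"
  shows "\<forall>x. reach R1 x = reach R2 x"
  using reach_cl assms(3) by metis

end
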